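(* Let $\mathrm{sendMsg}:\mathbb{V}\times A\times\mathbb{V}\times A\times B\to(\mathbb{V}\times C)^{*}$ and $\odot:C\times C\to C$. If calls $\mathrm{reduceByKey}(\odot,\cdot)$ (on pair RDDs over $\mathbb{V}\times C$) have deterministic outcomes, then calls $\mathrm{aggregateMessages}(\mathrm{sendMsg},\odot,\mathit{graphRdd})$ have deterministic outcomes.
   Context: Lists are finite; $X^{*}$ denotes lists over $X$; $\mathrm{foldl}(f,b,[x_1,\dots,x_n])=f(\cdots f(f(b,x_1),x_2)\cdots,x_n)$ and $\mathrm{reducel}(f,[x_1,\dots,x_n])=\mathrm{foldl}(f,x_1,[x_2,\dots,x_n])$. An RDD is a list of lists ("partitions"); a pair RDD is an RDD of (key, value) pairs; $\mathrm{filterkey}(k,L)$ lists the values of pairs with key $k$ in $L$ in order. A partitioning of a list $L$ splits $L$ into consecutive pieces and permutes them. $\mathrm{reduceByKey}_{\mathrm{det}}(\odot,[q_1,\dots,q_m])$ returns a pair RDD containing each key $k$ occurring in some $q_i$ once, with value $\mathrm{reducel}(\odot,[c_{i_1},\dots,c_{i_r}])$ where $i_1<\dots<i_r$ are the indices of pieces containing $k$ and $c_i=\mathrm{reducel}(\odot,\mathrm{filterkey}(k,q_i))$; calls $\mathrm{reduceByKey}(\odot,\cdot)$ have deterministic outcomes if the value at every key $k$ occurring in $L$ of $\mathrm{reduceByKey}_{\mathrm{det}}(\odot,P(L))$ equals $\mathrm{reducel}(\odot,\mathrm{filterkey}(k,L))$ for all lists $L$ of pairs and partitionings $P$. Let $\mathbb{V}$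 be the set of vertex identifiers. A graph RDD with vertex attributes in $A$ and edge attributes in $B$ consists of a vertex RDD (an RDD over $\mathbb{V}\times A$ in which each vertex identifier appears at most once) and an edge RDD (an RDD over $\mathbb{V}\times\mathbb{V}\times B$ of triples (source, destination, attribute), multi-edges allowed), such that every endpoint of an edge appears in the vertex RDD; two graph RDDs represent the same graph if they have the same vertex pairs and the same multiset of edge triples, possibly partitioned and ordered differently. $\mathrm{aggregateMessages}(\mathrm{sendMsg},\odot,\mathit{graphRdd})$: replace each edge partition $[e_1,\dots,e_s]$ by the concatenation of the lists $\mathrm{sendMsg}(u,a_u,v,a_v,b)$ for $e_j=(u,v,b)$, where $a_u,a_v$ are the attributes of $u,v$ in the vertex RDD, obtaining a pair RDD over $\mathbb{V}\times C$, and apply $\mathrm{reduceByKey}(\odot,\cdot)$ to it (this last step being executed in a possibly non-deterministic order, as modeled by reduceByKey). Calls $\mathrm{aggregateMessages}(\mathrm{sendMsg},\odot,\mathit{graphRdd})$ have deterministic outcomes if for any two graph RDDs $g_1,g_2$ representing the same graph and every vertex identifier $v$, the value associated with $v$ in $\mathrm{aggregateMessages}(\mathrm{sendMsg},\odot,g_1)$ equals that in $\mathrm{aggregateMessages}(\mathrm{sendMsg},\odot,g_2)$. *)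

theory Defs
  imports Main "HOL-Library.Multiset"
begin

text \<open>An RDD over X is a list of lists (partitions) of X.\<close>
type_synonym 'x rdd = "'x list list"

definition reducel :: "('c \<Rightarrow> 'c \<Rightarrow> 'c) \<Rightarrow> 'c list \<Rightarrow> 'c" where
  "reducel f xs = foldl f (hd xs) (tl xs)"

definition filterkey :: "'k \<Rightarrow> ('k \<times> 'c) list \<Rightarrow> 'c list" where
  "filterkey k L = map snd (filter (\<lambda>p. fst p = k) L)"

definition is_partitioning :: "'x rdd \<Rightarrow> 'x list \<Rightarrow> bool" where
  "is_partitioning P L \<longleftrightarrow> (\<exists>ps. concat ps = L \<and> mset P = mset ps)"

text \<open>Deterministic reduceByKey; the resulting pair RDD (each key once) is
  represented by the partial map from keys to their values.\<close>
definition reduceByKey_det :: "('c \<Rightarrow> 'c \<Rightarrow> 'c) \<Rightarrow> ('k \<times> 'c) rdd \<Rightarrow> 'k \<Rightarrow> 'c option" where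
  "reduceByKey_det f qs k =
     (if k \<in> fst ` set (concat qs)
      then Some (reducel f (map (\<lambda>q. reducel f (filterkey k q))
                               (filter (\<lambda>q. k \<in> fst ` set q) qs)))
      else None)"

definition reduceByKey_deterministic :: "('c \<Rightarrow> 'c \<Rightarrow> 'c) \<Rightarrow> 'k itself \<Rightarrow> bool" where
  "reduceByKey_deterministic f (_ :: 'k itself) \<longleftrightarrow>
     (\<forall>(L :: ('k \<times> 'c) list) P. is_partitioning P L \<longrightarrow>
        (\<forall>k \<in> fst ` set L. reduceByKey_det f P k = Some (reducel f (filterkey k L))))"

definition reduceByKey_outcomes :: "('c \<Rightarrow> 'c \<Rightarrow> 'c) \<Rightarrow> ('k \<times> 'c) rdd \<Rightarrow> ('k \<Rightarrow> 'c option) set" where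
  "reduceByKey_outcomes f R = {reduceByKey_det f P | P. is_partitioning P (concat R)}"

type_synonym ('v, 'a, 'b) graph_rdd = "('v \<times> 'a) rdd \<times> ('v \<times> 'v \<times> 'b) rdd"

definition graph_rdd :: "('v, 'a, 'b) graph_rdd \<Rightarrow> bool" where
  "graph_rdd g \<longleftrightarrow> distinct (map fst (concat (fst g))) \<and>
     (\<forall>(u, v, b) \<in> set (concat (snd g)).
        u \<in> fst ` set (concat (fst g)) \<and> v \<in> fst ` set (concat (fst g)))"

definition same_graph :: "('v, 'a, 'b) graph_rdd \<Rightarrow> ('v, 'a, 'b) graph_rdd \<Rightarrow> bool" where
  "same_graph g1 g2 \<longleftrightarrow> set (concat (fst g1)) = set (concat (fst g2)) \<and>
     mset (concat (snd g1)) = mset (concat (snd g2))"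

definition vattr :: "('v, 'a, 'b) graph_rdd \<Rightarrow> 'v \<Rightarrow> 'a" where
  "vattr g u = the (map_of (concat (fst g)) u)"

definition message_rdd ::
  "('v \<Rightarrow> 'a \<Rightarrow> 'v \<Rightarrow> 'a \<Rightarrow> 'b \<Rightarrow> ('v \<times> 'c) list) \<Rightarrow> ('v, 'a, 'b) graph_rdd \<Rightarrow> ('v \<times> 'c) rdd" where
  "message_rdd sendMsg g =
     map (\<lambda>part. concat (map (\<lambda>(u, v, b). sendMsg u (vattr g u) v (vattr g v) b) part)) (snd g)"

definition aggregateMessages_outcomes ::
  "('v \<Rightarrow> 'a \<Rightarrow> 'v \<Rightarrow> 'a \<Rightarrow> 'b \<Rightarrow> ('v \<times> 'c) list) \<Rightarrow> ('c \<Rightarrow> 'c \<Rightarrow> 'c)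
   \<Rightarrow> ('v, 'a, 'b) graph_rdd \<Rightarrow> ('v \<Rightarrow> 'c option) set" where
  "aggregateMessages_outcomes sendMsg f g = reduceByKey_outcomes f (message_rdd sendMsg g)"

definition aggregateMessages_deterministic ::
  "('v \<Rightarrow> 'a \<Rightarrow> 'v \<Rightarrow> 'a \<Rightarrow> 'b \<Rightarrow> ('v \<times> 'c) list) \<Rightarrow> ('c \<Rightarrow> 'c \<Rightarrow> 'c) \<Rightarrow> bool" where
  "aggregateMessages_deterministic sendMsg f \<longleftrightarrow>
     (\<forall>g1 g2. graph_rdd g1 \<longrightarrow> graph_rdd g2 \<longrightarrow> same_graph g1 g2 \<longrightarrow>
        (\<forall>r1 \<in> aggregateMessages_outcomes sendMsg f g1.
         \<forall>r2 \<in> aggregateMessages_outcomes sendMsg f g2. \<forall>v. r1 v = r2 v))"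

end

theory Submission
  imports Defs
begin

text \<open>If reduceByKey is deterministic, every outcome coincides with the sequential per-key
  reduction of the flattened message list. The messages of two representations of the same
  graph are the same lists of per-edge messages in a different order, and one of these
  permutations partitions both flattenings, so the two sequential reductions agree as well.\<close>

definition reduceByKey_seq :: "('c \<Rightarrow> 'c \<Rightarrow> 'c) \<Rightarrow> ('k \<times> 'c) list \<Rightarrow> 'k \<Rightarrow> 'c option" where
  "reduceByKey_seq f L k =
     (if k \<in> fst ` set L then Some (reducel f (filterkey k L)) else None)"

lemma set_concat_is_partitioning: "is_partitioning P L \<Longrightarrow> set (concat P) = set L"
  unfolding is_partitioning_def by (metis set_concat set_mset_mset)

lemma reduceByKey_det_eq_seq:
  assumes "reduceByKey_deterministic f TYPE('k)"
    and "is_partitioning P (L :: ('k \<times> 'c) list)"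
  shows "reduceByKey_det f P = reduceByKey_seq f L"
proof
  fix k
  show "reduceByKey_det f P k = reduceByKey_seq f L k"
  proof (cases "k \<in> fst ` set L")
    case True
    then show ?thesis
      using assms unfolding reduceByKey_deterministic_def reduceByKey_seq_def by auto
  next
    case False
    then show ?thesis
      using set_concat_is_partitioning[OF assms(2)]
      unfolding reduceByKey_det_def reduceByKey_seq_def by simp
  qed
qed

lemma reduceByKey_outcomes_deterministic:
  assumes "reduceByKey_deterministic f TYPE('k)"
    and "r \<in> reduceByKey_outcomes f (R :: ('k \<times> 'c) rdd)"
  shows "r = reduceByKey_seq f (concat R)"
  using assms reduceByKey_det_eq_seq unfolding reduceByKey_outcomes_def by blast

lemma reduceByKey_seq_concat_mset_eq:
  assumes det: "reduceByKey_deterministic f TYPE('k)"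
    and "mset qs1 = mset (qs2 :: ('k \<times> 'c) list list)"
  shows "reduceByKey_seq f (concat qs1) = reduceByKey_seq f (concat qs2)"
proof -
  have "is_partitioning qs2 (concat qs1)" "is_partitioning qs2 (concat qs2)"
    using assms(2) unfolding is_partitioning_def by auto
  then show ?thesis
    using reduceByKey_det_eq_seq[OF det] by metis
qed

definition edge_messages ::
  "('v \<Rightarrow> 'a \<Rightarrow> 'v \<Rightarrow> 'a \<Rightarrow> 'b \<Rightarrow> ('v \<times> 'c) list) \<Rightarrow> ('v, 'a, 'b) graph_rdd \<Rightarrow> ('v \<times> 'c) list list" where
  "edge_messages sendMsg g =
     map (\<lambda>(u, v, b). sendMsg u (vattr g u) v (vattr g v) b) (concat (snd g))"

lemma concat_map_concat_map:
  "concat (map (\<lambda>xs. concat (map h xs)) xss) = concat (map h (concat xss))"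
  by (induction xss) auto

lemma concat_message_rdd: "concat (message_rdd sendMsg g) = concat (edge_messages sendMsg g)"
  unfolding message_rdd_def edge_messages_def by (rule concat_map_concat_map)

lemma vattr_same_graph:
  assumes "graph_rdd g1" "graph_rdd g2" "same_graph g1 g2"
  shows "vattr g1 = vattr g2"
proof -
  have "map_of (concat (fst g1)) = map_of (concat (fst g2))"
    using assms map_of_inject_set unfolding graph_rdd_def same_graph_def by blast
  then show ?thesis unfolding vattr_def by simp
qed

lemma mset_edge_messages_same_graph:
  assumes "graph_rdd g1" "graph_rdd g2" "same_graph g1 g2"
  shows "mset (edge_messages sendMsg g1) = mset (edge_messages sendMsg g2)"
  using assms(3) vattr_same_graph[OF assms]
  unfolding edge_messages_def same_graph_def by simp

theorem proposition5:
  fixes sendMsg :: "'v \<Rightarrow> 'a \<Rightarrow> 'v \<Rightarrow> 'a \<Rightarrow> 'b \<Rightarrow> ('v \<times> 'c) list"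
    and f :: "'c \<Rightarrow> 'c \<Rightarrow> 'c"
  assumes "reduceByKey_deterministic f TYPE('v)"
  shows "aggregateMessages_deterministic sendMsg f"
  unfolding aggregateMessages_deterministic_def
proof (intro allI impI ballI)
  fix g1 g2 :: "('v, 'a, 'b) graph_rdd" and r1 r2 v
  assume g: "graph_rdd g1" "graph_rdd g2" "same_graph g1 g2"
    and "r1 \<in> aggregateMessages_outcomes sendMsg f g1"
    and "r2 \<in> aggregateMessages_outcomes sendMsg f g2"
  then have "r1 = reduceByKey_seq f (concat (edge_messages sendMsg g1))"
    and "r2 = reduceByKey_seq f (concat (edge_messages sendMsg g2))"
    unfolding aggregateMessages_outcomes_def
    by (metis reduceByKey_outcomes_deterministic[OF assms] concat_message_rdd)+
  then show "r1 v = r2 v"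
    using reduceByKey_seq_concat_mset_eq[OF assms mset_edge_messages_same_graph[OF g]]
    by simp
qed

end
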